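(* Let $n\ge 4$ and let $X$ be a real $2\times n$ matrix with $\Delta_{i,j}(X)>0$ for all $1\le i<j\le n$. Then for all integers $1\le j<k<l\le n-1$, $$D_k D_{l-j}\ \ge\ D_j D_{l-k}+D_l D_{k-j}.$$
   Context: $\Delta_{i,j}(X)$ is the determinant of the $2\times2$ submatrix of columns $i,j$ of $X$. Let $\sigma$ act on strictly increasing pairs $(i,j)$, $1\le i<j\le n$, by $\sigma(i,j)=(i+1,j+1)$ if $j<n$ and $\sigma(i,n)=(1,i+1)$. For $k\in\{1,\dots,n-1\}$, $D_k=\left(\prod_{m=0}^{n-1}\Delta_{\sigma^m(1,k+1)}(X)\right)^{1/n}$ (geometric mean over the orbit $O_k=\{\sigma^m(1,k+1)\}$). *)

theory Defs
  imports Complex_Main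
begin

text \<open>A real 2 x n matrix is represented as X :: nat => nat => real, with
  entry X r c for row r in {1,2} and column c in {1..n}.\<close>

definition Delta :: "(nat \<Rightarrow> nat \<Rightarrow> real) \<Rightarrow> nat \<times> nat \<Rightarrow> real" where
  "Delta X p = X 1 (fst p) * X 2 (snd p) - X 1 (snd p) * X 2 (fst p)"

definition sigma :: "nat \<Rightarrow> nat \<times> nat \<Rightarrow> nat \<times> nat" where
  "sigma n p = (if snd p < n then (fst p + 1, snd p + 1) else (1, fst p + 1))"

definition Dk :: "nat \<Rightarrow> (nat \<Rightarrow> nat \<Rightarrow> real) \<Rightarrow> nat \<Rightarrow> real" where
  "Dk n X k = root n (\<Prod>m<n. Delta X ((sigma n ^^ m) (1, k + 1)))"

end

theory Submission
  imports Defs "HOL-Analysis.Convex"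
begin

text \<open>Extend the columns of X to all indices by X(a + n) = -X(a). The 2 x 2 minors of the
  extended matrix are n-periodic and positive on every window 0 < b - a < n, and the orbit O_k
  runs through the windows of width k, so D_k is the n-th root of the product of n consecutive
  such minors, starting anywhere. Applying the three-term Pluecker relation factorwise writes
  D_k D_(l-j) as the root of a product of sums, and the geometric mean is superadditive.\<close>

lemma geometric_mean_superadditive:
  fixes b c :: "'a \<Rightarrow> real"
  assumes "finite S" "S \<noteq> {}"
    and b: "\<And>i. i \<in> S \<Longrightarrow> b i > 0" and c: "\<And>i. i \<in> S \<Longrightarrow> c i > 0"
  shows "root (card S) (\<Prod>i\<in>S. b i) + root (card S) (\<Prod>i\<in>S. c i)
           \<le> root (card S) (\<Prod>i\<in>S. b i + c i)"
proof -
  define N where "N = card S"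
  have N: "N > 0" using assms by (simp add: N_def card_gt_0_iff)
  have bc: "b i + c i > 0" if "i \<in> S" for i using b c that by (simp add: add_pos_pos)
  have P: "(\<Prod>i\<in>S. b i + c i) > 0" using bc by (simp add: prod_pos)
  have "(\<Prod>i\<in>S. b i / (b i + c i)) powr (1 / N) + (\<Prod>i\<in>S. c i / (b i + c i)) powr (1 / N)
      \<le> (\<Sum>i\<in>S. b i / (b i + c i) / N) + (\<Sum>i\<in>S. c i / (b i + c i) / N)"
    unfolding N_def using assms bc
    by (intro add_mono arith_geom_mean) (auto intro: less_imp_le)
  also have "\<dots> = (\<Sum>i\<in>S. 1 / N)"
    unfolding sum.distrib[symmetric]
  proof (rule sum.cong)
    fix i assume "i \<in> S"
    then have "b i + c i \<noteq> 0" using bc by (simp add: less_imp_neq[symmetric])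
    then show "b i / (b i + c i) / N + c i / (b i + c i) / N = 1 / N"
      by (simp add: add_divide_distrib[symmetric])
  qed simp
  also have "\<dots> = 1" using N by (simp add: N_def)
  finally have "(\<Prod>i\<in>S. b i) powr (1 / N) + (\<Prod>i\<in>S. c i) powr (1 / N)
      \<le> (\<Prod>i\<in>S. b i + c i) powr (1 / N)"
    using b c P by (simp add: prod_dividef powr_divide prod_nonneg less_imp_le
        add_divide_distrib[symmetric] divide_le_eq)
  then show ?thesis
    using N b c P by (simp add: N_def root_powr_inverse prod_pos less_imp_le)
qed

lemma prod_lessThan_shift_periodic:
  fixes f :: "nat \<Rightarrow> 'a::comm_monoid_mult"
  assumes "\<And>m. f (m + n) = f m"
  shows "(\<Prod>m<n. f (m + c)) = (\<Prod>m<n. f m)"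
proof (induction c)
  case (Suc c)
  show ?case
  proof (cases "n = 0")
    case False
    have "(\<Prod>m<n. f (m + Suc c)) = prod f {Suc c..<Suc (c + n)}"
      by (rule prod.reindex_bij_witness[of _ "\<lambda>i. i - Suc c" "\<lambda>m. m + Suc c"]) auto
    also have "\<dots> = prod f {Suc c..<c + n} * f c"
      using False assms[of c] by simp
    also have "\<dots> = prod f {c..<c + n}"
      using False by (simp add: prod.atLeast_Suc_lessThan mult.commute)
    also have "\<dots> = (\<Prod>m<n. f (m + c))"
      by (rule prod.reindex_bij_witness[of _ "\<lambda>m. m + c" "\<lambda>i. i - c"]) auto
    finally show ?thesis using Suc by simp
  qed simp
qed simp

definition twisted_col :: "nat \<Rightarrow> (nat \<Rightarrow> nat \<Rightarrow> real) \<Rightarrow> nat \<Rightarrow> nat \<Rightarrow> real" where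
  "twisted_col n X r a = (-1) ^ ((a - 1) div n) * X r ((a - 1) mod n + 1)"

definition twisted_minor :: "nat \<Rightarrow> (nat \<Rightarrow> nat \<Rightarrow> real) \<Rightarrow> nat \<Rightarrow> nat \<Rightarrow> real" where
  "twisted_minor n X a b =
     twisted_col n X 1 a * twisted_col n X 2 b - twisted_col n X 1 b * twisted_col n X 2 a"

lemma twisted_minor_pluecker:
  "twisted_minor n X a c * twisted_minor n X b d
     = twisted_minor n X a b * twisted_minor n X c d + twisted_minor n X a d * twisted_minor n X b c"
  unfolding twisted_minor_def by algebra

lemma twisted_col_low: "1 \<le> a \<Longrightarrow> a \<le> n \<Longrightarrow> twisted_col n X r a = X r a"
  by (simp add: twisted_col_def)

lemma twisted_col_add_period:
  assumes "1 \<le> a" "n > 0"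
  shows "twisted_col n X r (a + n) = - twisted_col n X r a"
proof -
  have "a + n - 1 = (a - 1) + n" using assms by simp
  then show ?thesis using assms by (simp add: twisted_col_def le_div_geq le_mod_geq)
qed

lemma twisted_col_high:
  assumes "1 \<le> a" "a \<le> n"
  shows "twisted_col n X r (a + n) = - X r a"
  using assms by (simp add: twisted_col_add_period twisted_col_low)

lemma twisted_minor_add_period_mult:
  assumes "1 \<le> a" "1 \<le> b" "n > 0"
  shows "twisted_minor n X (a + q * n) (b + q * n) = twisted_minor n X a b"
proof (induction q)
  case (Suc q)
  have "twisted_minor n X (a + Suc q * n) (b + Suc q * n)
      = twisted_minor n X ((a + q * n) + n) ((b + q * n) + n)"
    by (simp add: add_ac)
  also have "\<dots> = twisted_minor n X (a + q * n) (b + q * n)"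
    using assms by (simp add: twisted_minor_def twisted_col_add_period)
  finally show ?case using Suc by simp
qed simp

lemma twisted_minor_pos:
  assumes pos: "\<And>i j. 1 \<le> i \<Longrightarrow> i < j \<Longrightarrow> j \<le> n \<Longrightarrow> Delta X (i, j) > 0"
    and "1 \<le> a" "a < b" "b < a + n"
  shows "twisted_minor n X a b > 0"
proof -
  have n: "n > 0" using assms by simp
  define q where "q = (a - 1) div n"
  define a' where "a' = (a - 1) mod n + 1"
  define b' where "b' = b - q * n"
  have a': "1 \<le> a'" "a' \<le> n" "a = a' + q * n"
    using n assms(2) div_mult_mod_eq[of "a - 1" n] mod_less_divisor[OF n, of "a - 1"]
    by (auto simp: a'_def q_def)
  have b': "a' < b'" "b' < a' + n" "b = b' + q * n"
    using a' assms by (auto simp: b'_def)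
  have "twisted_minor n X a' b' > 0"
  proof (cases "b' \<le> n")
    case True
    then show ?thesis
      using pos[of a' b'] a' b' by (simp add: twisted_minor_def twisted_col_low Delta_def)
  next
    case False
    define c where "c = b' - n"
    have c: "1 \<le> c" "c < a'" "b' = c + n" using False b' by (auto simp: c_def)
    then have "twisted_minor n X a' b' = Delta X (c, a')"
      using a' by (simp add: twisted_minor_def twisted_col_low twisted_col_high Delta_def)
    then show ?thesis using pos[of c a'] a' c by simp
  qed
  then show ?thesis
    using a' b' n by (simp add: twisted_minor_add_period_mult)
qed

lemma sigma_orbit:
  assumes "1 \<le> k" "k < n" "m < n"
  shows "(sigma n ^^ m) (1, k + 1)
           = (if m < n - k then (m + 1, m + 1 + k) else (m + k + 1 - n, m + 1))"
  using assms(3)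
proof (induction m)
  case (Suc m)
  then have step: "(sigma n ^^ Suc m) (1, k + 1)
      = sigma n (if m < n - k then (m + 1, m + 1 + k) else (m + k + 1 - n, m + 1))"
    by simp
  consider "Suc m < n - k" | "m = n - k - 1" | "n - k \<le> m" by linarith
  then show ?case
  proof cases
    case 1
    then show ?thesis unfolding step by (simp add: sigma_def)
  next
    case 2
    then have "m < n - k" "\<not> Suc m < n - k" using assms by auto
    then show ?thesis unfolding step using 2 assms by (simp add: sigma_def)
  next
    case 3
    then show ?thesis unfolding step using assms Suc.prems by (simp add: sigma_def)
  qed
qed (use assms in simp)

lemma Delta_sigma_orbit:
  assumes "1 \<le> k" "k < n" "m < n"
  shows "Delta X ((sigma n ^^ m) (1, k + 1)) = twisted_minor n X (m + 1) (m + 1 + k)"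
proof (cases "m < n - k")
  case True
  then show ?thesis
    using assms unfolding sigma_orbit[OF assms]
    by (simp add: twisted_minor_def twisted_col_low Delta_def)
next
  case False
  define c where "c = m + k + 1 - n"
  have c: "1 \<le> c" "c \<le> n" "m + 1 + k = c + n" using False assms by (auto simp: c_def)
  have "(sigma n ^^ m) (1, k + 1) = (c, m + 1)"
    using False unfolding sigma_orbit[OF assms] by (simp add: c_def)
  then show ?thesis using c assms unfolding c(3)
    by (simp add: twisted_minor_def twisted_col_low twisted_col_high Delta_def)
qed

lemma Dk_eq_root_prod_twisted_minor:
  assumes "a < b" "b < a + n"
  shows "Dk n X (b - a) = root n (\<Prod>m<n. twisted_minor n X (m + a + 1) (m + b + 1))"
proof -
  define f where "f m = twisted_minor n X (m + 1) (m + 1 + (b - a))" for m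
  have "f (m + n) = f m" for m
    using twisted_minor_add_period_mult[of "m + 1" "m + 1 + (b - a)" n X 1] assms
    by (simp add: f_def add_ac)
  then have "(\<Prod>m<n. f (m + a)) = (\<Prod>m<n. f m)"
    by (rule prod_lessThan_shift_periodic)
  moreover have "f (m + a) = twisted_minor n X (m + a + 1) (m + b + 1)" for m
    using assms by (simp add: f_def)
  moreover have "Dk n X (b - a) = root n (\<Prod>m<n. f m)"
    unfolding Dk_def f_def using assms
    by (intro arg_cong[where f = "root n"] prod.cong refl Delta_sigma_orbit) auto
  ultimately show ?thesis by simp
qed

theorem mainTheorem9:
  fixes n :: nat and X :: "nat \<Rightarrow> nat \<Rightarrow> real"
  assumes "n \<ge> 4"
    and "\<And>i j. 1 \<le> i \<Longrightarrow> i < j \<Longrightarrow> j \<le> n \<Longrightarrow> Delta X (i, j) > 0"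
    and "1 \<le> j" "j < k" "k < l" "l \<le> n - 1"
  shows "Dk n X k * Dk n X (l - j) \<ge> Dk n X j * Dk n X (l - k) + Dk n X l * Dk n X (k - j)"
proof -
  define M where "M a b m = twisted_minor n X (m + a + 1) (m + b + 1)" for a b m
  have D: "Dk n X (b - a) = root n (\<Prod>m<n. M a b m)" if "a < b" "b < a + n" for a b
    unfolding M_def using that by (rule Dk_eq_root_prod_twisted_minor)
  have M_pos: "M a b m > 0" if "a < b" "b < a + n" for a b m
    unfolding M_def using that assms(2) by (intro twisted_minor_pos) auto
  have pluecker: "M 0 k m * M j l m = M 0 j m * M k l m + M 0 l m * M j k m" for m
    unfolding M_def by (rule twisted_minor_pluecker)
  have "Dk n X j * Dk n X (l - k) + Dk n X l * Dk n X (k - j)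
      = root n (\<Prod>m<n. M 0 j m * M k l m) + root n (\<Prod>m<n. M 0 l m * M j k m)"
    using D[of 0 j] D[of k l] D[of 0 l] D[of j k] assms
    by (simp add: real_root_mult prod.distrib)
  also have "\<dots> \<le> root n (\<Prod>m<n. M 0 j m * M k l m + M 0 l m * M j k m)"
    using geometric_mean_superadditive[of "{..<n}"] M_pos assms
    by (simp add: lessThan_empty_iff)
  also have "\<dots> = root n (\<Prod>m<n. M 0 k m * M j l m)"
    by (simp only: pluecker)
  also have "\<dots> = Dk n X k * Dk n X (l - j)"
    using D[of 0 k] D[of j l] assms by (simp add: real_root_mult prod.distrib)
  finally show ?thesis .
qed

end
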